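(* Suppose Assumptions A1–A3 hold. Let $\bm{X}_t=\{\bm{x}_1,\dots,\bm{x}_t\}$ be generated by density-based exploration, $\bm{x}_{t+1}\in\arg\min_{\bm{x}\in\mathcal{X}}W_t(\bm{x})$ (equivalently $\arg\max\hat\sigma_t$), where $W_t$ uses bandwidth $\ell_t$ at iteration $t$. Then (i) if $\ell_t\equiv\ell$ is fixed, $\inf_t h_{\mathcal{X},\bm{X}_t}\le R_\Psi\ell$; (ii) there exists a bandwidth sequence $\ell_t\to0$ such that $\inf_t h_{\mathcal{X},\bm{X}_t}=0$.
   Context: A1: $\mathcal{X}\subset\mathbb{R}^d$ compact, convex, nonempty interior. A2: $f$ continuous (not used in the selection rule). A3: kernel $k(\bm{x},\bm{x}')=\Psi((\bm{x}-\bm{x}')/\ell)$ with bandwidth $\ell>0$, where $\Psi:\mathbb{R}^d\to[0,\infty)$ has support contained in $B(\bm{0},R_\Psi)$, is continuous at $\bm{0}$, $\Psi(\bm{0})>0$, $\sup\Psi\le M_\Psi$. $W_t(\bm{x})=\sum_{i=1}^tk(\bm{x},\bm{x}_i)$, $\hat\sigma_t=W_t^{-1/2}$ with $c/0=\infty$. Fill distance $h_{\mathcal{X},\bm{X}_t}=\sup_{\bm{x}\in\mathcal{X}}\min_{i\le t}\|\bm{x}-\bm{x}_i\|$. *)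

theory Defs
  imports "HOL-Analysis.Analysis"
begin

definition kernel_density ::
  "('a::real_normed_vector \<Rightarrow> real) \<Rightarrow> real \<Rightarrow> (nat \<Rightarrow> 'a) \<Rightarrow> nat \<Rightarrow> 'a \<Rightarrow> real" where
  "kernel_density \<Psi> l P t y = (\<Sum>i=1..t. \<Psi> ((1 / l) *\<^sub>R (y - P i)))"

definition fill_distance :: "'a::metric_space set \<Rightarrow> 'a set \<Rightarrow> real" where
  "fill_distance S A = (SUP x\<in>S. INF a\<in>A. dist x a)"

definition dbe_run ::
  "'a::real_normed_vector set \<Rightarrow> ('a \<Rightarrow> real) \<Rightarrow> (nat \<Rightarrow> real) \<Rightarrow> (nat \<Rightarrow> 'a) \<Rightarrow> bool" where
  "dbe_run S \<Psi> ls P \<longleftrightarrow> P 1 \<in> S \<and>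
     (\<forall>t\<ge>1. P (Suc t) \<in> S \<and>
        (\<forall>y\<in>S. kernel_density \<Psi> (ls t) P t (P (Suc t)) \<le> kernel_density \<Psi> (ls t) P t y))"

end

theory Submission
  imports Defs
begin

text \<open>If the fill distance after step t exceeds R\<ell>, some point of S is farther than R\<ell> from all
  previous points, so W_t vanishes there; the minimiser x_{t+1} then also has W_t = 0, and since
  \<Psi> is positive on a ball B(0,\<delta>), it lies at distance at least \<delta>\<ell> from all previous points.
  As long as the bandwidth stays equal to \<ell>, the points are therefore \<delta>\<ell>-separated, which by
  compactness of S can happen only for boundedly many consecutive steps. For (ii) the bandwidth
  1/(k+1) is held fixed on a block long enough for this argument, for every k.\<close>

definition close_pair_bound :: "'a::metric_space set \<Rightarrow> real \<Rightarrow> nat \<Rightarrow> bool" where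
  "close_pair_bound S d N \<longleftrightarrow>
     (\<forall>f. (\<forall>i\<le>N. f i \<in> S) \<longrightarrow> (\<exists>i j. i < j \<and> j \<le> N \<and> dist (f i) (f j) < d))"

lemma compact_imp_close_pair_bound:
  fixes S :: "'a::metric_space set"
  assumes "compact S" "d > 0"
  shows "\<exists>N. close_pair_bound S d N"
proof -
  obtain C where C: "C \<subseteq> S" "finite C" "S \<subseteq> (\<Union>c\<in>C. ball c (d/2))"
    using compactE_image[OF assms(1), of S "\<lambda>c. ball c (d/2)"] assms(2) by force
  have "\<exists>i j. i < j \<and> j \<le> card C \<and> dist (f i) (f j) < d"
    if f: "\<forall>i\<le>card C. f i \<in> S" for f
  proof -
    define g where "g i = (SOME c. c \<in> C \<and> dist c (f i) < d/2)" for i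
    have g: "g i \<in> C \<and> dist (g i) (f i) < d/2" if "i \<le> card C" for i
      unfolding g_def by (rule someI_ex) (use C(3) f that in \<open>force simp: dist_commute\<close>)
    have "\<not> inj_on g {0..card C}"
    proof
      assume "inj_on g {0..card C}"
      then have "card {0..card C} \<le> card C"
        using card_inj_on_le[OF _ _ C(2)] g by force
      then show False by simp
    qed
    then obtain i j where ij: "i \<le> card C" "j \<le> card C" "i \<noteq> j" "g i = g j"
      unfolding inj_on_def by auto
    have "dist (f i) (f j) \<le> dist (g i) (f i) + dist (g j) (f j)"
      using ij(4) dist_triangle3 by metis
    also have "\<dots> < d" using g[OF ij(1)] g[OF ij(2)] by simp
    finally show ?thesis using ij by (metis dist_commute nat_neq_iff)
  qed
  then show ?thesis unfolding close_pair_bound_def by blast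
qed

lemma isCont_pos_on_ball:
  fixes f :: "'a::metric_space \<Rightarrow> real"
  assumes "isCont f x" "f x > 0"
  obtains \<delta> where "\<delta> > 0" "\<forall>y. dist y x < \<delta> \<longrightarrow> f y > 0"
proof -
  have "(f \<longlongrightarrow> f x) (nhds x)"
    using assms(1) tendsto_at_iff_tendsto_nhds unfolding isCont_def by blast
  then have "\<forall>\<^sub>F y in nhds x. f y > 0"
    using order_tendstoD(1) assms(2) by blast
  then show thesis using that unfolding eventually_nhds_metric by blast
qed

text \<open>Bandwidth 1/(k+1) is used on the k-th block of length N k + 1, so the blocks start at
  T k = 1 + (N 0 + 1) + ... + (N (k-1) + 1) and g t is the index of the block containing t.\<close>

lemma blockwise_bandwidth_schedule:
  fixes N :: "nat \<Rightarrow> nat"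
  obtains ls :: "nat \<Rightarrow> real" where "\<forall>t. ls t > 0" "ls \<longlonglongrightarrow> 0"
    "\<And>k. \<exists>a\<ge>1. \<forall>t. a \<le> t \<and> t \<le> a + N k \<longrightarrow> ls t = inverse (real (Suc k))"
proof
  define T where "T = rec_nat (1::nat) (\<lambda>k s. s + N k + 1)"
  have T0: "T 0 = 1" and TSuc: "T (Suc k) = T k + N k + 1" for k
    unfolding T_def by simp_all
  have T_mono: "T i \<le> T j" if "i \<le> j" for i j
    using that by (induction rule: dec_induct) (auto simp: TSuc)
  have T_ge: "T k \<ge> k + 1" for k by (induction k) (auto simp: T0 TSuc)
  define g where "g t = (LEAST k. t < T (Suc k))" for t
  have g_bound: "t < T (Suc (g t))" for t
    unfolding g_def by (rule LeastI[of _ t]) (use T_ge[of "Suc t"] in simp)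
  have g_le: "g t \<le> k" if "t < T (Suc k)" for t k
    unfolding g_def using that by (rule Least_le)
  have g_ge: "k \<le> g t" if "T k \<le> t" for t k
    using T_mono[of "Suc (g t)" k] g_bound[of t] that by (meson not_less_eq_eq order.strict_trans2 not_less)
  define ls where "ls t = inverse (real (Suc (g t)))" for t
  show "\<forall>t. ls t > 0" unfolding ls_def by simp
  have "filterlim g at_top sequentially"
    unfolding filterlim_at_top eventually_sequentially using g_ge by blast
  then show "ls \<longlonglongrightarrow> 0"
    unfolding ls_def using filterlim_compose[OF LIMSEQ_inverse_real_of_nat] by blast
  show "\<exists>a\<ge>1. \<forall>t. a \<le> t \<and> t \<le> a + N k \<longrightarrow> ls t = inverse (real (Suc k))" for k
  proof (intro exI[of _ "T k"] conjI allI impI)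
    show "T k \<ge> 1" using T_ge[of k] by simp
    fix t assume "T k \<le> t \<and> t \<le> T k + N k"
    then have "g t = k" using g_ge[of k t] g_le[of t k] TSuc[of k] by simp
    then show "ls t = inverse (real (Suc k))" unfolding ls_def by simp
  qed
qed

lemma fill_distance_nonneg:
  fixes S :: "'a::metric_space set"
  assumes "compact S" "S \<noteq> {}" "finite A" "A \<noteq> {}"
  shows "0 \<le> fill_distance S A"
proof -
  obtain x a0 where x: "x \<in> S" and a0: "a0 \<in> A" using assms by auto
  obtain B where B: "\<forall>y\<in>S. dist a0 y \<le> B"
    using compact_imp_bounded[OF assms(1)] bounded_any_center by metis
  have "bdd_above ((\<lambda>y. INF a\<in>A. dist y a) ` S)"
  proof (rule bdd_aboveI2)
    fix y assume "y \<in> S"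
    have "(INF a\<in>A. dist y a) \<le> dist y a0"
      using a0 assms(3) by (intro cINF_lower) auto
    also have "\<dots> \<le> B" using B \<open>y \<in> S\<close> by (metis dist_commute)
    finally show "(INF a\<in>A. dist y a) \<le> B" .
  qed
  moreover have "0 \<le> (INF a\<in>A. dist x a)"
    using assms(4) by (intro cINF_greatest) auto
  ultimately show ?thesis
    unfolding fill_distance_def using x by (meson cSUP_upper order_trans)
qed

lemma fill_distance_gt_imp_far_point:
  fixes S :: "'a::metric_space set"
  assumes "S \<noteq> {}" "finite A" "fill_distance S A > c"
  obtains x where "x \<in> S" "\<And>a. a \<in> A \<Longrightarrow> dist x a > c"
proof (rule ccontr)
  assume "\<not> thesis"
  then have near: "\<forall>x\<in>S. \<exists>a\<in>A. dist x a \<le> c"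
    using that by (meson not_le)
  have "(INF a\<in>A. dist x a) \<le> c" if "x \<in> S" for x
    using near that assms(2) by (meson bdd_below_finite finite_imageI cINF_lower2)
  then have "fill_distance S A \<le> c"
    unfolding fill_distance_def using assms(1) by (intro cSUP_least) auto
  then show False using assms(3) by simp
qed

lemma kernel_density_nonneg:
  assumes "\<forall>z. \<Psi> z \<ge> 0"
  shows "kernel_density \<Psi> l P t y \<ge> 0"
  unfolding kernel_density_def using assms by (simp add: sum_nonneg)

lemma kernel_density_eq_0_if_far:
  fixes \<Psi> :: "'a::real_normed_vector \<Rightarrow> real"
  assumes supp: "closure {z. \<Psi> z \<noteq> 0} \<subseteq> ball 0 R" and l: "l > 0"
    and far: "\<And>i. i \<in> {1..t} \<Longrightarrow> dist y (P i) > R * l"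
  shows "kernel_density \<Psi> l P t y = 0"
proof -
  have "\<Psi> ((1/l) *\<^sub>R (y - P i)) = 0" if "i \<in> {1..t}" for i
  proof -
    have "norm ((1/l) *\<^sub>R (y - P i)) = dist y (P i) / l"
      using l by (simp add: dist_norm)
    also have "\<dots> > R" using far[OF that] l by (simp add: pos_less_divide_eq)
    finally have "(1/l) *\<^sub>R (y - P i) \<notin> ball 0 R" by simp
    then have "(1/l) *\<^sub>R (y - P i) \<notin> {z. \<Psi> z \<noteq> 0}"
      using supp closure_subset by (meson subsetD)
    then show ?thesis by simp
  qed
  then show ?thesis unfolding kernel_density_def by simp
qed

lemma dist_ge_if_kernel_density_eq_0:
  fixes \<Psi> :: "'a::real_normed_vector \<Rightarrow> real"
  assumes nonneg: "\<forall>z. \<Psi> z \<ge> 0" and pos: "\<forall>z. norm z < \<delta> \<longrightarrow> \<Psi> z > 0"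
    and l: "l > 0" and W0: "kernel_density \<Psi> l P t y = 0" and i: "i \<in> {1..t}"
  shows "dist y (P i) \<ge> \<delta> * l"
proof -
  have "\<Psi> ((1/l) *\<^sub>R (y - P i)) = 0"
    using W0 i nonneg unfolding kernel_density_def by (simp add: sum_nonneg_eq_0_iff)
  then have "\<delta> \<le> norm ((1/l) *\<^sub>R (y - P i))"
    using pos by (metis less_irrefl not_le)
  also have "\<dots> = dist y (P i) / l"
    using l by (simp add: dist_norm)
  finally show ?thesis using l by (simp add: pos_le_divide_eq)
qed

lemma dbe_run_in:
  assumes "dbe_run S \<Psi> ls P" "n \<ge> 1"
  shows "P n \<in> S"
proof (cases n)
  case (Suc t)
  then show ?thesis using assms unfolding dbe_run_def by (cases t) auto
qed (use assms in simp)

lemma dbe_run_step_separated: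
  fixes S :: "'a::real_normed_vector set"
  assumes run: "dbe_run S \<Psi> ls P" and t: "t \<ge> 1" and l: "ls t > 0"
    and nonneg: "\<forall>z. \<Psi> z \<ge> 0" and supp: "closure {z. \<Psi> z \<noteq> 0} \<subseteq> ball 0 R"
    and pos: "\<forall>z. norm z < \<delta> \<longrightarrow> \<Psi> z > 0"
    and fill: "fill_distance S (P ` {1..t}) > R * ls t"
    and i: "i \<in> {1..t}"
  shows "dist (P (Suc t)) (P i) \<ge> \<delta> * ls t"
proof -
  let ?W = "kernel_density \<Psi> (ls t) P t"
  have "S \<noteq> {}" using run unfolding dbe_run_def by auto
  then obtain x where x: "x \<in> S" "\<And>a. a \<in> P ` {1..t} \<Longrightarrow> dist x a > R * ls t"
    using fill_distance_gt_imp_far_point[OF _ finite_imageI[OF finite_atLeastAtMost] fill] by metis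
  have "?W (P (Suc t)) \<le> ?W x"
    using run t x(1) unfolding dbe_run_def by blast
  also have "?W x = 0"
    using kernel_density_eq_0_if_far[OF supp l] x(2) by simp
  finally have "?W (P (Suc t)) = 0"
    using kernel_density_nonneg[OF nonneg] by (simp add: order_antisym)
  then show ?thesis using dist_ge_if_kernel_density_eq_0[OF nonneg pos l _ i] by blast
qed

lemma INF_fill_distance_nonneg:
  fixes S :: "'a::metric_space set" and P :: "nat \<Rightarrow> 'a"
  assumes "compact S" "S \<noteq> {}"
  shows "0 \<le> (INF t\<in>{1..}. fill_distance S (P ` {1..t}))"
  by (rule cINF_greatest) (auto intro!: fill_distance_nonneg[OF assms])

lemma INF_fill_distance_le:
  fixes S :: "'a::metric_space set" and P :: "nat \<Rightarrow> 'a"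
  assumes "compact S" "S \<noteq> {}" "t \<ge> 1" "fill_distance S (P ` {1..t}) \<le> c"
  shows "(INF t\<in>{1..}. fill_distance S (P ` {1..t})) \<le> c"
proof -
  have "bdd_below ((\<lambda>t. fill_distance S (P ` {1..t})) ` {1..})"
    by (rule bdd_belowI2[where m=0]) (auto intro!: fill_distance_nonneg[OF assms(1,2)])
  then show ?thesis using assms(3,4) by (intro cINF_lower2[where x=t]) auto
qed

lemma dbe_run_INF_fill_distance_le_on_window:
  fixes S :: "'a::real_normed_vector set"
  assumes run: "dbe_run S \<Psi> ls P" and compact: "compact S"
    and nonneg: "\<forall>z. \<Psi> z \<ge> 0" and supp: "closure {z. \<Psi> z \<noteq> 0} \<subseteq> ball 0 R"
    and pos: "\<forall>z. norm z < \<delta> \<longrightarrow> \<Psi> z > 0" and l: "l > 0"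
    and bound: "close_pair_bound S (\<delta> * l) N"
    and window: "\<forall>t. a \<le> t \<and> t \<le> a + N \<longrightarrow> ls t = l" and a: "a \<ge> 1"
  shows "(INF t\<in>{1..}. fill_distance S (P ` {1..t})) \<le> R * l"
proof -
  have S_ne: "S \<noteq> {}" using run unfolding dbe_run_def by auto
  have "\<exists>t\<ge>1. fill_distance S (P ` {1..t}) \<le> R * l"
  proof (rule ccontr)
    assume far: "\<not> ?thesis"
    have "\<forall>i\<le>N. P (a + i) \<in> S" using dbe_run_in[OF run] a by simp
    then obtain i j where ij: "i < j" "j \<le> N" "dist (P (a + i)) (P (a + j)) < \<delta> * l"
      using bound[unfolded close_pair_bound_def, rule_format, of "\<lambda>i. P (a + i)"] by blast
    define t where "t = a + j - 1"
    have t: "t \<ge> 1" "Suc t = a + j" using ij a unfolding t_def by auto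
    then have "ls t = l" using ij window by simp
    have "fill_distance S (P ` {1..t}) > R * ls t" using far t \<open>ls t = l\<close> by force
    moreover have "a + i \<in> {1..t}" using ij a t(2) by simp
    ultimately have "dist (P (Suc t)) (P (a + i)) \<ge> \<delta> * ls t"
      using dbe_run_step_separated[OF run t(1) _ nonneg supp pos] l \<open>ls t = l\<close> by simp
    then show False using ij(3) t \<open>ls t = l\<close> by (simp add: dist_commute)
  qed
  then show ?thesis using INF_fill_distance_le[OF compact S_ne] by blast
qed

lemma dbe_run_INF_fill_distance_eq_0:
  fixes S :: "'a::real_normed_vector set"
  assumes run: "dbe_run S \<Psi> ls P" and compact: "compact S"
    and nonneg: "\<forall>z. \<Psi> z \<ge> 0" and supp: "closure {z. \<Psi> z \<noteq> 0} \<subseteq> ball 0 R"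
    and pos: "\<forall>z. norm z < \<delta> \<longrightarrow> \<Psi> z > 0" and R: "R > 0"
    and bounds: "\<And>k. close_pair_bound S (\<delta> * inverse (real (Suc k))) (N k)"
    and blocks: "\<And>k. \<exists>a\<ge>1. \<forall>t. a \<le> t \<and> t \<le> a + N k \<longrightarrow> ls t = inverse (real (Suc k))"
  shows "(INF t\<in>{1..}. fill_distance S (P ` {1..t})) = 0"
proof (rule antisym)
  show "(INF t\<in>{1..}. fill_distance S (P ` {1..t})) \<le> 0"
  proof (rule field_le_epsilon)
    fix c :: real assume "c > 0"
    then obtain k where "inverse (real (Suc k)) < c / R"
      using reals_Archimedean R by (metis divide_pos_pos)
    then have "R * inverse (real (Suc k)) \<le> c" using R by (simp add: field_simps)
    moreover have "(INF t\<in>{1..}. fill_distance S (P ` {1..t})) \<le> R * inverse (real (Suc k))"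
      using blocks[of k] dbe_run_INF_fill_distance_le_on_window[OF run compact nonneg supp pos
          _ bounds] by auto
    ultimately show "(INF t\<in>{1..}. fill_distance S (P ` {1..t})) \<le> 0 + c" by simp
  qed
  have "S \<noteq> {}" using run unfolding dbe_run_def by auto
  then show "0 \<le> (INF t\<in>{1..}. fill_distance S (P ` {1..t}))"
    using INF_fill_distance_nonneg[OF compact] by blast
qed

theorem mainTheorem6:
  fixes S :: "'a::euclidean_space set"
    and \<Psi> :: "'a \<Rightarrow> real"
    and R M :: real
  assumes "compact S" and "convex S" and "interior S \<noteq> {}"
    and "\<forall>z. \<Psi> z \<ge> 0"
    and "closure {z. \<Psi> z \<noteq> 0} \<subseteq> ball 0 R"
    and "isCont \<Psi> 0" and "\<Psi> 0 > 0"
    and "\<forall>z. \<Psi> z \<le> M"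
  shows "(\<forall>l>0. \<forall>P. dbe_run S \<Psi> (\<lambda>_. l) P \<longrightarrow>
             (INF t\<in>{1..}. fill_distance S (P ` {1..t})) \<le> R * l)
       \<and> (\<exists>ls. (\<forall>t. ls t > 0) \<and> ls \<longlonglongrightarrow> 0 \<and>
             (\<forall>P. dbe_run S \<Psi> ls P \<longrightarrow>
                (INF t\<in>{1..}. fill_distance S (P ` {1..t})) = 0))"
proof -
  note compact = assms(1) and nonneg = assms(4) and supp = assms(5)
  obtain \<delta> where "\<delta> > 0" and "\<forall>z. dist z 0 < \<delta> \<longrightarrow> \<Psi> z > 0"
    using isCont_pos_on_ball[OF assms(6,7)] by blast
  then have pos: "\<forall>z. norm z < \<delta> \<longrightarrow> \<Psi> z > 0" by simp
  define N where "N l = (SOME N. close_pair_bound S (\<delta> * l) N)" for l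
  have N: "close_pair_bound S (\<delta> * l) (N l)" if "l > 0" for l
    unfolding N_def using compact_imp_close_pair_bound[OF compact] \<open>\<delta> > 0\<close> that
    by (simp add: someI_ex)
  have fixed: "(INF t\<in>{1..}. fill_distance S (P ` {1..t})) \<le> R * l"
    if "l > 0" "dbe_run S \<Psi> (\<lambda>_. l) P" for l P
    using dbe_run_INF_fill_distance_le_on_window[OF that(2) compact nonneg supp pos that(1) N, of 1]
      that(1) by simp
  have "0 \<in> closure {z. \<Psi> z \<noteq> 0}"
    using assms(7) closure_subset[of "{z. \<Psi> z \<noteq> 0}"] by auto
  then have R: "R > 0" using supp by (meson subsetD centre_in_ball)
  obtain ls where "\<forall>t. ls t > 0" "ls \<longlonglongrightarrow> 0"
    and blocks: "\<And>k. \<exists>a\<ge>1. \<forall>t. a \<le> t \<and> t \<le> a + N (inverse (real (Suc k))) \<longrightarrow>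
                         ls t = inverse (real (Suc k))"
    using blockwise_bandwidth_schedule[of "\<lambda>k. N (inverse (real (Suc k)))"] by blast
  then show ?thesis
    using fixed dbe_run_INF_fill_distance_eq_0[OF _ compact nonneg supp pos R N blocks] by auto
qed

end
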